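(* If $\bar f:[a,b]\to\mathbb{R}_\mathcal{I}$ is continuous on $[a,b]$, then $\bar f$ is interval Riemann integrable on $[a,b]$.
   Context: An interval number is a closed interval $\bar a=[a_l,a_r]$ with $a_l<a_r$ real; $\mathbb{R}_\mathcal{I}$ is the set of interval numbers. Write $a_c=(a_l+a_r)/2$, $a_w=(a_r-a_l)/2>0$, $\bar a=\langle a_c;a_w\rangle=[a_c-a_w,a_c+a_w]$. Operations: $\bar a+\bar b=\langle a_c+b_c;a_wb_w\rangle$, $k\bar a=\langle ka_c;a_w^k\rangle$ for real $k$. Distance $d(\bar a,\bar b)=\sqrt{(a_c-b_c)^2+(\ln a_w-\ln b_w)^2}$; continuity is with respect to $d$. $\bar f$ is interval Riemann integrable with integral $\bar A\in\mathbb{R}_\mathcal{I}$ if for every $\varepsilon>0$ there is $\delta>0$ such that for every partition $a=t_0<\dots<t_n=b$ with $t_i-t_{i-1}<\delta$ and tags $\xi_i\in[t_{i-1},t_i]$, $d\big(\sum_{i=1}^n(t_i-t_{i-1})\bar f(\xi_i),\bar A\big)<\varepsilon$. *)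

theory Defs
  imports "HOL-Analysis.Analysis"
begin

text \<open>Interval numbers [a_l,a_r] with a_l < a_r, represented in midpoint-radius form
  (a_c, a_w) with a_w > 0, i.e. the interval [a_c - a_w, a_c + a_w].\<close>

typedef interval = "{(c::real, w::real). w > 0}"
  by (rule exI[of _ "(0,1)"]) simp

definition ictr :: "interval \<Rightarrow> real" where "ictr A = fst (Rep_interval A)"
definition iwid :: "interval \<Rightarrow> real" where "iwid A = snd (Rep_interval A)"

definition imk :: "real \<Rightarrow> real \<Rightarrow> interval" where
  "imk c w = Abs_interval (c, w)"

definition ilower :: "interval \<Rightarrow> real" where "ilower A = ictr A - iwid A"
definition iupper :: "interval \<Rightarrow> real" where "iupper A = ictr A + iwid A"

definition iadd :: "interval \<Rightarrow> interval \<Rightarrow> interval" where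
  "iadd A B = imk (ictr A + ictr B) (iwid A * iwid B)"

definition iscale :: "real \<Rightarrow> interval \<Rightarrow> interval" where
  "iscale k A = imk (k * ictr A) (iwid A powr k)"

definition izero :: interval where "izero = imk 0 1"

definition idist :: "interval \<Rightarrow> interval \<Rightarrow> real" where
  "idist A B = sqrt ((ictr A - ictr B)\<^sup>2 + (ln (iwid A) - ln (iwid B))\<^sup>2)"

definition icontinuous_on :: "real \<Rightarrow> real \<Rightarrow> (real \<Rightarrow> interval) \<Rightarrow> bool" where
  "icontinuous_on a b f \<longleftrightarrow>
     (\<forall>x\<in>{a..b}. \<forall>\<epsilon>>0. \<exists>\<delta>>0. \<forall>y\<in>{a..b}. \<bar>y - x\<bar> < \<delta> \<longrightarrow> idist (f y) (f x) < \<epsilon>)"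

fun iriemann_sum :: "(real \<Rightarrow> interval) \<Rightarrow> (nat \<Rightarrow> real) \<Rightarrow> (nat \<Rightarrow> real) \<Rightarrow> nat \<Rightarrow> interval" where
  "iriemann_sum f t \<xi> 0 = izero"
| "iriemann_sum f t \<xi> (Suc n) =
     iadd (iriemann_sum f t \<xi> n) (iscale (t (Suc n) - t n) (f (\<xi> (Suc n))))"

definition iriemann_integrable :: "real \<Rightarrow> real \<Rightarrow> (real \<Rightarrow> interval) \<Rightarrow> bool" where
  "iriemann_integrable a b f \<longleftrightarrow>
     (\<exists>A::interval. \<forall>\<epsilon>>0. \<exists>\<delta>>0. \<forall>(n::nat) (t::nat \<Rightarrow> real) (\<xi>::nat \<Rightarrow> real).
        n \<ge> 1 \<and> t 0 = a \<and> t n = b \<and>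
        (\<forall>i\<in>{1..n}. t (i - 1) < t i \<and> t i - t (i - 1) < \<delta> \<and> t (i - 1) \<le> \<xi> i \<and> \<xi> i \<le> t i)
        \<longrightarrow> idist (iriemann_sum f t \<xi> n) A < \<epsilon>)"

end

theory Submission
  imports Defs
begin

text \<open>The chart \<open>A \<mapsto> (a\<^sub>c, ln a\<^sub>w)\<close> is a bijection from interval numbers onto
  \<open>\<real>\<^sup>2\<close> that turns the interval addition and scaling into the vector space operations and
  the distance \<open>d\<close> into the Euclidean distance. Hence interval Riemann sums of \<open>f\<close> are ordinary
  Riemann sums of a continuous \<open>\<real>\<^sup>2\<close>-valued function, which converge to its integral by
  uniform continuity on the compact interval; the integral of \<open>f\<close> is the preimage of that
  integral under the chart.\<close>

definition fine_tagged_partition ::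
    "real \<Rightarrow> real \<Rightarrow> real \<Rightarrow> nat \<Rightarrow> (nat \<Rightarrow> real) \<Rightarrow> (nat \<Rightarrow> real) \<Rightarrow> bool" where
  "fine_tagged_partition \<delta> a b n t \<xi> \<longleftrightarrow> 1 \<le> n \<and> t 0 = a \<and> t n = b \<and>
     (\<forall>i<n. t i < t (Suc i) \<and> t (Suc i) - t i < \<delta> \<and> t i \<le> \<xi> (Suc i) \<and> \<xi> (Suc i) \<le> t (Suc i))"

definition riemann_sum :: "(real \<Rightarrow> 'a::real_vector) \<Rightarrow> (nat \<Rightarrow> real) \<Rightarrow> (nat \<Rightarrow> real) \<Rightarrow> nat \<Rightarrow> 'a" where
  "riemann_sum g t \<xi> n = (\<Sum>i<n. (t (Suc i) - t i) *\<^sub>R g (\<xi> (Suc i)))"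

lemma lift_Suc_mono_le_upto:
  fixes t :: "nat \<Rightarrow> 'a::order"
  assumes "\<And>i. i < n \<Longrightarrow> t i \<le> t (Suc i)" "m \<le> k" "k \<le> n"
  shows "t m \<le> t k"
  by (rule lift_Suc_mono_le_ivl[where N="{..<n}"]) (use assms in auto)

lemma fine_tagged_partition_points:
  assumes "fine_tagged_partition \<delta> a b n t \<xi>" "m \<le> n"
  shows "t m \<in> {a..b}"
proof -
  have step: "t i \<le> t (Suc i)" if "i < n" for i
    using assms(1) that by (auto simp: fine_tagged_partition_def less_imp_le)
  have "t 0 \<le> t m" "t m \<le> t n"
    using lift_Suc_mono_le_upto[of n t, OF step] assms(2) by auto
  then show ?thesis
    using assms(1) by (simp add: fine_tagged_partition_def)
qed

lemma integral_over_partition: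
  fixes g :: "real \<Rightarrow> 'a::banach"
  assumes mono: "\<And>i. i < n \<Longrightarrow> t i \<le> t (Suc i)"
    and integrable: "g integrable_on {t 0..t n}"
  shows "integral {t 0..t n} g = (\<Sum>i<n. integral {t i..t (Suc i)} g)"
  using assms
proof (induction n)
  case 0
  then show ?case by simp
next
  case (Suc n)
  have "t 0 \<le> t n"
    using lift_Suc_mono_le_upto[of "Suc n" t 0 n] Suc.prems(1) by auto
  then have "integral {t 0..t (Suc n)} g = integral {t 0..t n} g + integral {t n..t (Suc n)} g"
    using Henstock_Kurzweil_Integration.integral_combine[of "t 0" "t n" "t (Suc n)" g] Suc.prems by simp
  moreover have "g integrable_on {t 0..t n}"
    using integrable_on_subinterval[OF Suc.prems(2)] Suc.prems(1) by auto
  ultimately show ?case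
    using Suc by simp
qed

lemma riemann_cell_error:
  fixes g :: "real \<Rightarrow> 'a::banach"
  assumes "u \<le> x" "x \<le> v" "continuous_on {u..v} g"
    and "\<And>y. y \<in> {u..v} \<Longrightarrow> norm (g x - g y) \<le> \<eta>"
  shows "norm ((v - u) *\<^sub>R g x - integral {u..v} g) \<le> (v - u) * \<eta>"
proof -
  have "(v - u) *\<^sub>R g x - integral {u..v} g = integral {u..v} (\<lambda>y. g x - g y)"
    using assms(1-3) by (simp add: integral_diff integrable_continuous_interval)
  also have "norm \<dots> \<le> \<eta> * (v - u)"
    using assms by (intro integral_bound) (auto intro!: continuous_intros)
  finally show ?thesis
    by (simp add: mult.commute)
qed

lemma riemann_sum_error:
  fixes g :: "real \<Rightarrow> 'a::banach"
  assumes cont: "continuous_on {a..b} g"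
    and modulus: "\<And>x y. x \<in> {a..b} \<Longrightarrow> y \<in> {a..b} \<Longrightarrow> \<bar>x - y\<bar> < \<delta> \<Longrightarrow> norm (g x - g y) \<le> \<eta>"
    and partition: "fine_tagged_partition \<delta> a b n t \<xi>"
  shows "norm (riemann_sum g t \<xi> n - integral {a..b} g) \<le> (b - a) * \<eta>"
proof -
  note P = partition[unfolded fine_tagged_partition_def]
  have pts: "t i \<in> {a..b}" if "i \<le> n" for i
    using fine_tagged_partition_points[OF partition that] .
  have cell: "norm ((t (Suc i) - t i) *\<^sub>R g (\<xi> (Suc i)) - integral {t i..t (Suc i)} g)
      \<le> (t (Suc i) - t i) * \<eta>" if "i < n" for i
  proof (rule riemann_cell_error)
    have "{t i..t (Suc i)} \<subseteq> {a..b}"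
      using pts[of i] pts[of "Suc i"] that by auto
    then show "continuous_on {t i..t (Suc i)} g"
      using continuous_on_subset[OF cont] by blast
    show "norm (g (\<xi> (Suc i)) - g y) \<le> \<eta>" if "y \<in> {t i..t (Suc i)}" for y
      using P \<open>i < n\<close> that \<open>{t i..t (Suc i)} \<subseteq> {a..b}\<close>
      by (intro modulus) (auto simp: abs_le_iff)
  qed (use P that in auto)
  have "integral {a..b} g = (\<Sum>i<n. integral {t i..t (Suc i)} g)"
    using P integral_over_partition[of n t g] integrable_continuous_interval[OF cont]
    by (auto simp: less_imp_le)
  then have "norm (riemann_sum g t \<xi> n - integral {a..b} g)
      = norm (\<Sum>i<n. (t (Suc i) - t i) *\<^sub>R g (\<xi> (Suc i)) - integral {t i..t (Suc i)} g)"
    by (simp add: riemann_sum_def sum_subtractf)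
  also have "\<dots> \<le> (\<Sum>i<n. (t (Suc i) - t i) * \<eta>)"
    using cell by (intro sum_norm_le) auto
  also have "\<dots> = (b - a) * \<eta>"
    using P by (simp add: sum_distrib_right[symmetric] sum_lessThan_telescope)
  finally show ?thesis .
qed

lemma riemann_sum_converges:
  fixes g :: "real \<Rightarrow> 'a::banach"
  assumes "a < b" "continuous_on {a..b} g" "e > 0"
  obtains \<delta> where "\<delta> > 0"
    "\<And>n t \<xi>. fine_tagged_partition \<delta> a b n t \<xi> \<Longrightarrow> norm (riemann_sum g t \<xi> n - integral {a..b} g) < e"
proof -
  define \<eta> where "\<eta> = e / (2 * (b - a))"
  have "\<eta> > 0"
    using assms by (simp add: \<eta>_def)
  moreover have "uniformly_continuous_on {a..b} g"
    using assms(2) by (simp add: compact_uniformly_continuous)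
  ultimately obtain \<delta> where "\<delta> > 0"
    and \<delta>: "\<And>x y. x \<in> {a..b} \<Longrightarrow> y \<in> {a..b} \<Longrightarrow> dist x y < \<delta> \<Longrightarrow> dist (g x) (g y) < \<eta>"
    unfolding uniformly_continuous_on_def by metis
  have "norm (riemann_sum g t \<xi> n - integral {a..b} g) < e"
    if "fine_tagged_partition \<delta> a b n t \<xi>" for n t \<xi>
  proof -
    have "norm (riemann_sum g t \<xi> n - integral {a..b} g) \<le> (b - a) * \<eta>"
      using \<delta> by (intro riemann_sum_error[OF assms(2) _ that]) (auto simp: dist_norm less_imp_le)
    also have "\<dots> < e"
      using assms by (simp add: \<eta>_def field_simps)
    finally show ?thesis .
  qed
  with \<open>\<delta> > 0\<close> show ?thesis
    using that by blast
qed

lemma iwid_pos: "iwid A > 0"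
  using Rep_interval[of A] by (auto simp: iwid_def)

definition icoords :: "interval \<Rightarrow> real \<times> real" where
  "icoords A = (ictr A, ln (iwid A))"

lemma icoords_imk: "w > 0 \<Longrightarrow> icoords (imk c w) = (c, ln w)"
  by (simp add: icoords_def imk_def ictr_def iwid_def Abs_interval_inverse)

lemma surj_icoords: "surj icoords"
proof (rule surjI)
  show "icoords (imk (fst p) (exp (snd p))) = p" for p
    by (simp add: icoords_imk)
qed

lemma idist_eq_dist_icoords: "idist A B = dist (icoords A) (icoords B)"
  by (simp add: idist_def icoords_def dist_Pair_Pair dist_real_def)

lemma icoords_izero: "icoords izero = 0"
  by (simp add: izero_def icoords_imk zero_prod_def)

lemma icoords_iadd: "icoords (iadd A B) = icoords A + icoords B"
  using iwid_pos[of A] iwid_pos[of B]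
  by (simp add: iadd_def icoords_imk ln_mult) (simp add: icoords_def)

lemma icoords_iscale: "icoords (iscale k A) = k *\<^sub>R icoords A"
  using iwid_pos[of A] by (simp add: iscale_def icoords_imk ln_powr) (simp add: icoords_def)

lemma icoords_iriemann_sum:
  "icoords (iriemann_sum f t \<xi> n) = riemann_sum (icoords \<circ> f) t \<xi> n"
  by (induction n) (simp_all add: riemann_sum_def icoords_izero icoords_iadd icoords_iscale)

lemma icontinuous_on_imp_continuous_on_icoords:
  assumes "icontinuous_on a b f"
  shows "continuous_on {a..b} (icoords \<circ> f)"
  using assms unfolding icontinuous_on_def continuous_on_iff
  by (simp add: idist_eq_dist_icoords dist_real_def)

lemma ball_atLeast1_atMost_iff: "(\<forall>i\<in>{1..n}. P i) \<longleftrightarrow> (\<forall>i<n. P (Suc i))"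
  unfolding image_Suc_lessThan[symmetric] by blast

lemma iriemann_integrable_iff:
  "iriemann_integrable a b f \<longleftrightarrow> (\<exists>A. \<forall>\<epsilon>>0. \<exists>\<delta>>0. \<forall>n t \<xi>.
     fine_tagged_partition \<delta> a b n t \<xi> \<longrightarrow> idist (iriemann_sum f t \<xi> n) A < \<epsilon>)"
  unfolding iriemann_integrable_def fine_tagged_partition_def ball_atLeast1_atMost_iff
  by simp

theorem theorem5p3:
  fixes a b :: real and f :: "real \<Rightarrow> interval"
  assumes "a < b"
    and "icontinuous_on a b f"
  shows "iriemann_integrable a b f"
proof -
  have cont: "continuous_on {a..b} (icoords \<circ> f)"
    using assms(2) by (rule icontinuous_on_imp_continuous_on_icoords)
  obtain A where A: "icoords A = integral {a..b} (icoords \<circ> f)"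
    using surj_icoords by (metis surjD)
  show ?thesis
    unfolding iriemann_integrable_iff
  proof (intro exI[of _ A] allI impI)
    fix \<epsilon> :: real
    assume "\<epsilon> > 0"
    with riemann_sum_converges[OF assms(1) cont] obtain \<delta> where "\<delta> > 0" and
      "\<And>n t \<xi>. fine_tagged_partition \<delta> a b n t \<xi> \<Longrightarrow>
        norm (riemann_sum (icoords \<circ> f) t \<xi> n - integral {a..b} (icoords \<circ> f)) < \<epsilon>"
      by metis
    then show "\<exists>\<delta>>0. \<forall>n t \<xi>. fine_tagged_partition \<delta> a b n t \<xi> \<longrightarrow>
        idist (iriemann_sum f t \<xi> n) A < \<epsilon>"
      by (auto simp: idist_eq_dist_icoords icoords_iriemann_sum A dist_norm)
  qed
qed

end
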